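(* Let $f:\mathbb N\to\mathbb N$ be defined by $f(n)=\lfloor\varphi n\rfloor+1$ if $n\in R_{0,0}$ and $f(n)=\lfloor(\varphi-1)n\rfloor$ if $n\in R_{1,0}$, and let $\tau:\mathbb N\to\mathbb N$ be defined by $\tau(n)=\lfloor\varphi n+1\rfloor$ if $n\in R_{2,0}$, $\tau(n)=\lfloor\varphi n-1\rfloor$ if $n\in R_{1,0}$, and $\tau(n)=\lfloor(\varphi-1)n+1\rfloor$ if $n\in R_{1,1}$. Both are permutations of $\mathbb N$, and $$f\circ\tau=\tau^{-1}\circ f.$$
   Context: $\mathbb N=\{1,2,\dots\}$, $\varphi=\frac{1+\sqrt5}{2}$, $F$ the Fibonacci numbers ($F(0)=0,F(1)=F(2)=1$). For $i\in\mathbb Z^{\ge0},j\in\mathbb Z$, $R_{i,j}$ is the range of $n\mapsto F(i+1)\lfloor n\varphi\rfloor+F(i)n-j$, $n\in\mathbb N$; $R_{0,0},R_{1,0}$ partition $\mathbb N$, as do $R_{2,0},R_{1,0},R_{1,1}$. *)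

theory Defs
  imports Complex_Main "HOL-Number_Theory.Fib"
begin

definition phi :: real where "phi = (1 + sqrt 5) / 2"

definition R :: "nat \<Rightarrow> int \<Rightarrow> int set" where
  "R i j = {int (fib (Suc i)) * \<lfloor>real n * phi\<rfloor> + int (fib i) * int n - j | n::nat. n \<ge> 1}"

text \<open>The maps f and tau on the positive integers; the value outside the stated
  cases (only n = 0, since the R-sets partition the positive integers) is irrelevant and set to 0.\<close>
definition fmap :: "nat \<Rightarrow> nat" where
  "fmap n = (if int n \<in> R 0 0 then nat (\<lfloor>phi * real n\<rfloor> + 1)
             else if int n \<in> R 1 0 then nat \<lfloor>(phi - 1) * real n\<rfloor>
             else 0)"

definition tau :: "nat \<Rightarrow> nat" where
  "tau n = (if int n \<in> R 2 0 then nat \<lfloor>phi * real n + 1\<rfloor>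
            else if int n \<in> R 1 0 then nat \<lfloor>phi * real n - 1\<rfloor>
            else if int n \<in> R 1 1 then nat \<lfloor>(phi - 1) * real n + 1\<rfloor>
            else 0)"

end

theory Submission
  imports Defs
begin

(* Write a(n) = floor(n phi) and b(n) = a(n) + n = floor(n phi^2) for the lower and upper
   Wythoff sequences. Since 1/phi + 1/phi^2 = 1, Beatty's theorem says that the ranges A of a
   and B of b (over n >= 1) partition the positive integers. With t = frac(n phi) one has
   a(n) phi = b(n) - t (phi - 1) and b(n) phi = a(n) + b(n) + t (2 - phi), hence
   a(a(n)) = b(n) - 1 and a(b(n)) = a(n) + b(n). These identify R_{0,0}, R_{1,0}, R_{2,0},
   R_{1,1} with A, B, a(B), a(A), and show that f swaps a(n) and b(n), while tau sends
   a(a(n)) to a(n), a(b(n)) to b(b(n)) and b(n) to b(a(n)). So tau f tau = f holds on each of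
   the classes a(A), a(B), B, which cover the positive integers; as f is an involution,
   tau is a bijection with inverse f tau f. *)

lemma bij_betw_conjugating_involution:
  assumes f_S: "f ` S \<subseteq> S" and g_S: "g ` S \<subseteq> S"
    and f_f: "\<forall>x\<in>S. f (f x) = x"
    and g_f_g: "\<forall>x\<in>S. g (f (g x)) = f x"
  shows "bij_betw g S S" and "\<forall>x\<in>S. f (g x) = inv_into S g (f x)"
proof -
  show bij: "bij_betw g S S"
  proof (rule bij_betw_byWitness[where f' = "f \<circ> g \<circ> f"])
    show "\<forall>x\<in>S. (f \<circ> g \<circ> f) (g x) = x"
      using f_f g_f_g by simp
    show "\<forall>y\<in>S. g ((f \<circ> g \<circ> f) y) = y"
      using f_f g_f_g f_S by (simp add: image_subset_iff)
    show "g ` S \<subseteq> S" "(f \<circ> g \<circ> f) ` S \<subseteq> S"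
      using f_S g_S by (auto simp: image_subset_iff)
  qed
  show "\<forall>x\<in>S. f (g x) = inv_into S g (f x)"
    using g_f_g f_S g_S bij_betw_imp_inj_on[OF bij]
    by (auto simp: image_subset_iff intro: inv_into_f_eq[symmetric])
qed

lemma frac_mult_less_1: "0 \<le> c \<Longrightarrow> c \<le> 1 \<Longrightarrow> frac x * c < 1"
  using mult_left_le[of c "frac x"] frac_lt_1[of x] by simp

section \<open>Beatty pairs\<close>

lemma of_nat_mult_irrational_notin_Ints:
  fixes \<alpha> :: real
  assumes "\<alpha> \<notin> \<rat>" "0 < n"
  shows "real n * \<alpha> \<notin> \<int>"
proof
  assume "real n * \<alpha> \<in> \<int>"
  then have "real n * \<alpha> \<in> \<rat>"
    using Ints_subset_Rats by blast
  then have "\<alpha> \<in> \<rat>"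
    using \<open>0 < n\<close> Rats_divide[OF _ Rats_of_nat[of n]] by fastforce
  with assms show False by simp
qed

lemma irrational_multiples_straddle:
  fixes \<gamma> :: real
  assumes "\<gamma> \<notin> \<rat>" "0 < \<gamma>" "0 < x" "x \<in> \<int>"
  obtains k :: nat where "real k * \<gamma> < x" "x < real (k + 1) * \<gamma>"
proof
  define k where "k = nat \<lfloor>x / \<gamma>\<rfloor>"
  have "real k = \<lfloor>x / \<gamma>\<rfloor>"
    using assms(2,3) unfolding k_def by simp
  then have "real k \<le> x / \<gamma>" "x / \<gamma> < real k + 1"
    by linarith+
  then have "real k * \<gamma> \<le> x" "x < real (k + 1) * \<gamma>"
    using assms(2) by (simp_all add: field_simps)
  moreover have "real k * \<gamma> \<noteq> x"
    using of_nat_mult_irrational_notin_Ints[OF assms(1)] assms(3,4) by (cases "k = 0") auto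
  ultimately show "real k * \<gamma> < x" "x < real (k + 1) * \<gamma>"
    by simp_all
qed

locale beatty_pair =
  fixes \<alpha> \<beta> :: real
  assumes alpha_irrational: "\<alpha> \<notin> \<rat>"
    and alpha_pos: "0 < \<alpha>" and beta_pos: "0 < \<beta>"
    and reciprocals_sum: "1 / \<alpha> + 1 / \<beta> = 1"
begin

lemma divide_alpha_add_divide_beta: "x / \<alpha> + x / \<beta> = x"
proof -
  have "x / \<alpha> + x / \<beta> = x * (1 / \<alpha> + 1 / \<beta>)"
    by (simp add: algebra_simps)
  then show ?thesis
    by (simp add: reciprocals_sum)
qed

lemma beta_irrational: "\<beta> \<notin> \<rat>"
proof
  assume "\<beta> \<in> \<rat>"
  then have "1 - 1 / \<beta> \<in> \<rat>" by simp
  also have "1 - 1 / \<beta> = inverse \<alpha>"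
    using reciprocals_sum by (simp add: inverse_eq_divide algebra_simps)
  finally have "inverse (inverse \<alpha>) \<in> \<rat>" by (rule Rats_inverse)
  with alpha_irrational show False by simp
qed

lemma floor_multiples_disjoint:
  assumes "0 < k"
  shows "\<lfloor>real k * \<alpha>\<rfloor> \<noteq> \<lfloor>real j * \<beta>\<rfloor>"
proof
  define m where "m = \<lfloor>real k * \<alpha>\<rfloor>"
  assume m_eq: "m = \<lfloor>real j * \<beta>\<rfloor>"
  have "real k * \<alpha> \<noteq> m"
    using of_nat_mult_irrational_notin_Ints[OF alpha_irrational assms] by auto
  then have "m < real k * \<alpha>" "real k * \<alpha> < m + 1"
    unfolding m_def by linarith+
  then have "m / \<alpha> < k" "k < (m + 1) / \<alpha>"
    using alpha_pos by (simp_all add: field_simps)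
  moreover have "m \<le> real j * \<beta>" "real j * \<beta> < m + 1"
    unfolding m_eq by linarith+
  then have "m / \<beta> \<le> j" "j < (m + 1) / \<beta>"
    using beta_pos by (simp_all add: field_simps)
  ultimately have "m < int (k + j)" "int (k + j) < m + 1"
    using divide_alpha_add_divide_beta[of m] divide_alpha_add_divide_beta[of "m + 1"]
    by linarith+
  then show False by simp
qed

lemma floor_multiples_cover:
  fixes m :: int
  assumes "0 < m"
  shows "(\<exists>k>0. \<lfloor>real k * \<alpha>\<rfloor> = m) \<or> (\<exists>j>0. \<lfloor>real j * \<beta>\<rfloor> = m)"
proof (rule ccontr)
  assume not_hit: "\<not> ?thesis"
  have m_succ: "0 < real_of_int (m + 1)" "real_of_int (m + 1) \<in> \<int>"
    using assms by simp_all
  from irrational_multiples_straddle[OF alpha_irrational alpha_pos m_succ] obtain k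
    where k: "real k * \<alpha> < m + 1" "m + 1 < real (k + 1) * \<alpha>" .
  from irrational_multiples_straddle[OF beta_irrational beta_pos m_succ] obtain j
    where j: "real j * \<beta> < m + 1" "m + 1 < real (j + 1) * \<beta>" .
  have "\<lfloor>real k * \<alpha>\<rfloor> \<noteq> m"
    using not_hit assms gr0I by (cases "k = 0") (simp, blast)
  moreover have "\<lfloor>real j * \<beta>\<rfloor> \<noteq> m"
    using not_hit assms gr0I by (cases "j = 0") (simp, blast)
  ultimately have "real k * \<alpha> < m" "real j * \<beta> < m"
    using k(1) j(1) by linarith+
  then have "real k < m / \<alpha>" "real j < m / \<beta>"
    "(m + 1) / \<alpha> < real k + 1" "(m + 1) / \<beta> < real j + 1"
    using k(2) j(2) alpha_pos beta_pos by (simp_all add: field_simps)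
  then have "real_of_int m - 1 < real (k + j)" "real (k + j) < real_of_int m"
    using divide_alpha_add_divide_beta[of m] divide_alpha_add_divide_beta[of "m + 1"]
    by simp_all
  then have "m - 1 < int (k + j)" "int (k + j) < m"
    by linarith+
  then show False by simp
qed

end

section \<open>The golden ratio\<close>

lemma phi_squared: "phi\<^sup>2 = phi + 1"
  by (simp add: phi_def power2_eq_square field_simps)

lemma phi_gt_1: "phi > 1"
  by (simp add: phi_def real_less_rsqrt)

lemma phi_less_2: "phi < 2"
proof -
  have "sqrt 5 < 3" by (rule real_less_lsqrt) auto
  then show ?thesis by (simp add: phi_def)
qed

lemma phi_irrational: "phi \<notin> \<rat>"
proof
  assume "phi \<in> \<rat>"
  then obtain p q :: nat where "q \<noteq> 0" and "\<bar>phi\<bar> = real p / real q" and "coprime p q"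
    by (rule Rats_abs_nat_div_natE)
  then have p_eq: "real p = phi * real q"
    using phi_gt_1 by (simp add: field_simps)
  then have "real p * real p = phi\<^sup>2 * real q * real q"
    by (simp add: power2_eq_square)
  also have "\<dots> = real q * (phi * real q + real q)"
    by (simp add: phi_squared algebra_simps)
  finally have "real p * real p = real q * (real p + real q)"
    by (simp add: p_eq)
  then have pq: "p * p = q * (p + q)"
    by (metis of_nat_add of_nat_eq_iff of_nat_mult)
  then have "q dvd p * p" by simp
  with \<open>coprime p q\<close> have "q = 1"
    by (simp add: coprime_absorb_right coprime_commute coprime_dvd_mult_right_iff)
  with pq have "p * p = p + 1" by simp
  then have "p dvd p + 1" by (metis dvd_triv_left)
  then have "p dvd 1" using dvd_add_right_iff[of p p 1] by simp
  with \<open>p * p = p + 1\<close> show False by simp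
qed

lemma beatty_pair_phi: "beatty_pair phi (phi + 1)"
proof
  show "phi \<notin> \<rat>" by (rule phi_irrational)
  show "0 < phi" "0 < phi + 1"
    using phi_gt_1 by simp_all
  show "1 / phi + 1 / (phi + 1) = 1"
    using phi_gt_1 phi_squared by (simp add: field_simps power2_eq_square)
qed

section \<open>Wythoff sequences\<close>

definition lower_wythoff :: "nat \<Rightarrow> nat" where
  "lower_wythoff n = nat \<lfloor>real n * phi\<rfloor>"

definition upper_wythoff :: "nat \<Rightarrow> nat" where
  "upper_wythoff n = lower_wythoff n + n"

lemma int_lower_wythoff: "int (lower_wythoff n) = \<lfloor>real n * phi\<rfloor>"
  using phi_gt_1 by (simp add: lower_wythoff_def)

lemma int_upper_wythoff: "int (upper_wythoff n) = \<lfloor>real n * (phi + 1)\<rfloor>"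
proof -
  have "\<lfloor>real n * (phi + 1)\<rfloor> = \<lfloor>real n * phi + of_int (int n)\<rfloor>"
    by (simp add: algebra_simps)
  then show ?thesis
    by (simp add: upper_wythoff_def int_lower_wythoff flip: floor_add_int)
qed

lemma floor_phi_mult: "\<lfloor>phi * real n\<rfloor> = int (lower_wythoff n)"
  by (simp add: int_lower_wythoff mult.commute)

lemma lower_wythoff_eqI:
  assumes "real m \<le> real n * phi" "real n * phi < real m + 1"
  shows "lower_wythoff n = m"
proof -
  have "\<lfloor>real n * phi\<rfloor> = int m"
    using assms by (simp add: floor_eq_iff)
  then show ?thesis by (simp add: lower_wythoff_def)
qed

lemma le_lower_wythoff: "n \<le> lower_wythoff n"
proof -
  have "real n \<le> real n * phi"
    using phi_gt_1 by (simp add: mult_le_cancel_left1)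
  then show ?thesis
    by (metis floor_mono floor_of_nat int_lower_wythoff of_nat_le_iff)
qed

lemma lower_wythoff_pos: "0 < n \<Longrightarrow> 0 < lower_wythoff n"
  using le_lower_wythoff[of n] by simp

lemma upper_wythoff_pos: "0 < n \<Longrightarrow> 0 < upper_wythoff n"
  by (simp add: upper_wythoff_def)

lemma strict_mono_lower_wythoff: "strict_mono lower_wythoff"
unfolding strict_mono_Suc_iff
proof
  fix n
  have "real n * phi + 1 \<le> real (Suc n) * phi"
    using phi_gt_1 by (simp add: algebra_simps)
  then have "\<lfloor>real n * phi\<rfloor> + 1 \<le> \<lfloor>real (Suc n) * phi\<rfloor>"
    by (metis floor_add_int floor_mono of_int_1)
  then have "int (lower_wythoff n) < int (lower_wythoff (Suc n))"
    unfolding int_lower_wythoff by linarith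
  then show "lower_wythoff n < lower_wythoff (Suc n)"
    by simp
qed

lemma frac_mult_phi_pos: "0 < n \<Longrightarrow> 0 < frac (real n * phi)"
  using of_nat_mult_irrational_notin_Ints[OF phi_irrational] by simp

lemma real_lower_wythoff: "real (lower_wythoff n) = real n * phi - frac (real n * phi)"
  by (simp add: frac_def flip: int_lower_wythoff)

lemma lower_wythoff_mult_phi:
  "real (lower_wythoff n) * phi = real (upper_wythoff n) - frac (real n * phi) * (phi - 1)"
proof -
  have "real (lower_wythoff n) * phi = real n * (phi * phi) - frac (real n * phi) * phi"
    by (simp add: real_lower_wythoff algebra_simps)
  also have "\<dots> = real n * phi + real n - frac (real n * phi) * phi"
    by (simp add: phi_squared[unfolded power2_eq_square] algebra_simps)
  also have "\<dots> = real (upper_wythoff n) - frac (real n * phi) * (phi - 1)"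
    by (simp add: real_lower_wythoff upper_wythoff_def algebra_simps)
  finally show ?thesis .
qed

lemma lower_wythoff_lower_wythoff:
  assumes "0 < n"
  shows "lower_wythoff (lower_wythoff n) + 1 = upper_wythoff n"
proof -
  have "0 < frac (real n * phi) * (phi - 1)"
    using frac_mult_phi_pos[OF assms] phi_gt_1 by simp
  moreover have "frac (real n * phi) * (phi - 1) < 1"
    using phi_gt_1 phi_less_2 by (intro frac_mult_less_1) simp_all
  moreover have "0 < upper_wythoff n"
    using assms by (rule upper_wythoff_pos)
  ultimately have "lower_wythoff (lower_wythoff n) = upper_wythoff n - 1"
    using lower_wythoff_mult_phi[of n] by (intro lower_wythoff_eqI) (simp_all add: of_nat_diff)
  with \<open>0 < upper_wythoff n\<close> show ?thesis by simp
qed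

lemma lower_wythoff_upper_wythoff:
  "lower_wythoff (upper_wythoff n) = lower_wythoff n + upper_wythoff n"
proof -
  have "real (upper_wythoff n) * phi = real (lower_wythoff n) * phi + real n * phi"
    by (simp add: upper_wythoff_def algebra_simps)
  also have "\<dots> = real (lower_wythoff n + upper_wythoff n) + frac (real n * phi) * (2 - phi)"
    unfolding lower_wythoff_mult_phi by (simp add: real_lower_wythoff algebra_simps)
  finally have "real (upper_wythoff n) * phi
      = real (lower_wythoff n + upper_wythoff n) + frac (real n * phi) * (2 - phi)" .
  moreover have "frac (real n * phi) * (2 - phi) < 1"
    using phi_gt_1 phi_less_2 by (intro frac_mult_less_1) simp_all
  moreover have "0 \<le> frac (real n * phi) * (2 - phi)"
    using phi_less_2 by simp
  ultimately show ?thesis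
    by (intro lower_wythoff_eqI) simp_all
qed

lemma lower_upper_wythoff_disjoint: "lower_wythoff ` {1..} \<inter> upper_wythoff ` {1..} = {}"
proof -
  have "lower_wythoff k \<noteq> upper_wythoff j" if "k \<ge> 1" for k j
    using beatty_pair.floor_multiples_disjoint[OF beatty_pair_phi, of k j] that
    by (simp flip: int_lower_wythoff int_upper_wythoff)
  then show ?thesis by auto
qed

lemma lower_upper_wythoff_cover:
  "lower_wythoff ` {1..} \<union> upper_wythoff ` {1..} = {1..}"
proof
  show "lower_wythoff ` {1..} \<union> upper_wythoff ` {1..} \<subseteq> {1..}"
    using lower_wythoff_pos upper_wythoff_pos by (auto simp: Suc_le_eq)
  show "{1..} \<subseteq> lower_wythoff ` {1..} \<union> upper_wythoff ` {1..}"
  proof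
    fix m :: nat
    assume "m \<in> {1..}"
    then have "(\<exists>k>0. \<lfloor>real k * phi\<rfloor> = int m) \<or>
        (\<exists>j>0. \<lfloor>real j * (phi + 1)\<rfloor> = int m)"
      using beatty_pair.floor_multiples_cover[OF beatty_pair_phi] by simp
    then show "m \<in> lower_wythoff ` {1..} \<union> upper_wythoff ` {1..}"
      by (auto simp flip: int_lower_wythoff int_upper_wythoff)
  qed
qed

lemma wythoff_cases:
  assumes "0 < m"
  obtains (lower) n where "0 < n" "m = lower_wythoff n"
    | (upper) n where "0 < n" "m = upper_wythoff n"
proof -
  from assms have "m \<in> lower_wythoff ` {1..} \<union> upper_wythoff ` {1..}"
    unfolding lower_upper_wythoff_cover by simp
  then show ?thesis
    using that by (auto simp: Suc_le_eq)
qed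

lemma wythoff_refined_cases:
  assumes "0 < m"
  obtains (lower_lower) n where "0 < n" "m = lower_wythoff (lower_wythoff n)"
    | (lower_upper) n where "0 < n" "m = lower_wythoff (upper_wythoff n)"
    | (upper) n where "0 < n" "m = upper_wythoff n"
  using assms
proof (cases m rule: wythoff_cases)
  case (lower k)
  from \<open>0 < k\<close> show ?thesis
  proof (cases k rule: wythoff_cases)
    case (lower j)
    with \<open>m = lower_wythoff k\<close> show ?thesis using that(1)[of j] by simp
  next
    case (upper j)
    with \<open>m = lower_wythoff k\<close> show ?thesis using that(2)[of j] by simp
  qed
next
  case (upper k)
  then show ?thesis using that(3)[of k] by simp
qed

lemma floor_phi_mult_add: "\<lfloor>phi * real n + of_int k\<rfloor> = int (lower_wythoff n) + k"
  by (simp add: floor_phi_mult flip: floor_add_int)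

lemma floor_phi_minus_1_mult_add:
  "\<lfloor>(phi - 1) * real n + of_int k\<rfloor> = int (lower_wythoff n) - int n + k"
proof -
  have rearrange: "(phi - 1) * real n + of_int k = phi * real n + of_int (k - int n)"
    by (simp add: algebra_simps)
  show ?thesis
    unfolding rearrange floor_phi_mult_add by simp
qed

lemma inj_lower_wythoff: "inj lower_wythoff"
  using strict_mono_lower_wythoff by (rule strict_mono_imp_inj_on)

section \<open>The maps f and tau\<close>

lemma int_mem_R_iff:
  assumes "\<And>n. n \<ge> 1 \<Longrightarrow>
    int (fib (Suc i)) * \<lfloor>real n * phi\<rfloor> + int (fib i) * int n - j = int (g n)"
  shows "int m \<in> R i j \<longleftrightarrow> m \<in> g ` {1..}"
  using assms unfolding R_def by force

lemma int_mem_R_0_0: "int m \<in> R 0 0 \<longleftrightarrow> m \<in> lower_wythoff ` {1..}"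
  by (rule int_mem_R_iff) (simp add: int_lower_wythoff)

lemma int_mem_R_1_0: "int m \<in> R 1 0 \<longleftrightarrow> m \<in> upper_wythoff ` {1..}"
  by (rule int_mem_R_iff) (simp add: int_lower_wythoff upper_wythoff_def)

lemma int_mem_R_2_0: "int m \<in> R 2 0 \<longleftrightarrow> m \<in> lower_wythoff ` upper_wythoff ` {1..}"
  unfolding image_comp
  by (rule int_mem_R_iff)
    (simp add: lower_wythoff_upper_wythoff,
      simp add: upper_wythoff_def int_lower_wythoff numeral_eq_Suc)

lemma int_mem_R_1_1: "int m \<in> R 1 1 \<longleftrightarrow> m \<in> lower_wythoff ` lower_wythoff ` {1..}"
  unfolding image_comp
proof (rule int_mem_R_iff)
  fix n :: nat
  assume "n \<ge> 1"
  then have "int (lower_wythoff (lower_wythoff n)) = int (upper_wythoff n) - 1"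
    using lower_wythoff_lower_wythoff[of n] by simp
  then show "int (fib (Suc 1)) * \<lfloor>real n * phi\<rfloor> + int (fib 1) * int n - 1
      = int ((lower_wythoff \<circ> lower_wythoff) n)"
    by (simp add: upper_wythoff_def int_lower_wythoff)
qed

lemma fmap_lower_wythoff:
  assumes "0 < n"
  shows "fmap (lower_wythoff n) = upper_wythoff n"
proof -
  have "int (lower_wythoff n) \<in> R 0 0"
    unfolding int_mem_R_0_0 using assms by simp
  then have "fmap (lower_wythoff n) = nat (\<lfloor>phi * real (lower_wythoff n)\<rfloor> + 1)"
    by (simp add: fmap_def)
  also have "\<dots> = upper_wythoff n"
    using lower_wythoff_lower_wythoff[of n] assms by (simp add: floor_phi_mult nat_add_distrib)
  finally show ?thesis .
qed

lemma fmap_upper_wythoff: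
  assumes "0 < n"
  shows "fmap (upper_wythoff n) = lower_wythoff n"
proof -
  have "upper_wythoff n \<in> upper_wythoff ` {1..}"
    using assms by simp
  then have "int (upper_wythoff n) \<notin> R 0 0" "int (upper_wythoff n) \<in> R 1 0"
    unfolding int_mem_R_0_0 int_mem_R_1_0 using lower_upper_wythoff_disjoint by blast+
  then have "fmap (upper_wythoff n) = nat \<lfloor>(phi - 1) * real (upper_wythoff n)\<rfloor>"
    by (simp add: fmap_def)
  also have "\<dots> = lower_wythoff n"
    using floor_phi_minus_1_mult_add[of "upper_wythoff n" 0]
    by (simp add: lower_wythoff_upper_wythoff)
  finally show ?thesis .
qed

lemma tau_lower_upper_wythoff:
  assumes "0 < n"
  shows "tau (lower_wythoff (upper_wythoff n)) = upper_wythoff (upper_wythoff n)"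
proof -
  have "int (lower_wythoff (upper_wythoff n)) \<in> R 2 0"
    unfolding int_mem_R_2_0 using assms by simp
  then have "tau (lower_wythoff (upper_wythoff n))
      = nat \<lfloor>phi * real (lower_wythoff (upper_wythoff n)) + 1\<rfloor>"
    by (simp add: tau_def)
  also have "\<dots> = upper_wythoff (upper_wythoff n)"
    using floor_phi_mult_add[of "lower_wythoff (upper_wythoff n)" 1]
      lower_wythoff_lower_wythoff[of "upper_wythoff n"] upper_wythoff_pos[OF assms]
    by (simp add: nat_add_distrib)
  finally show ?thesis .
qed

lemma tau_upper_wythoff:
  assumes "0 < n"
  shows "tau (upper_wythoff n) = upper_wythoff (lower_wythoff n)"
proof -
  have "upper_wythoff n \<in> upper_wythoff ` {1..}"
    using assms by simp
  moreover have "lower_wythoff ` upper_wythoff ` {1..} \<subseteq> lower_wythoff ` {1..}"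
    using lower_upper_wythoff_cover by blast
  ultimately have "int (upper_wythoff n) \<notin> R 2 0" "int (upper_wythoff n) \<in> R 1 0"
    unfolding int_mem_R_2_0 int_mem_R_1_0 using lower_upper_wythoff_disjoint by blast+
  then have "tau (upper_wythoff n) = nat \<lfloor>phi * real (upper_wythoff n) - 1\<rfloor>"
    by (simp add: tau_def)
  also have "\<dots> = lower_wythoff (upper_wythoff n) - 1"
    by (simp add: floor_phi_mult nat_diff_distrib)
  also have "\<dots> = upper_wythoff (lower_wythoff n)"
    unfolding lower_wythoff_upper_wythoff using lower_wythoff_lower_wythoff[of n] assms
    by (simp add: upper_wythoff_def)
  finally show ?thesis .
qed

lemma tau_lower_lower_wythoff:
  assumes "0 < n"
  shows "tau (lower_wythoff (lower_wythoff n)) = lower_wythoff n"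
proof -
  define m where "m = lower_wythoff (lower_wythoff n)"
  have "lower_wythoff n \<in> lower_wythoff ` {1..}" "m \<in> lower_wythoff ` {1..}"
    using assms lower_wythoff_pos[OF assms] by (simp_all add: m_def)
  then have "lower_wythoff n \<notin> upper_wythoff ` {1..}" "m \<notin> upper_wythoff ` {1..}"
    using lower_upper_wythoff_disjoint by blast+
  then have "int m \<notin> R 2 0" "int m \<notin> R 1 0"
    unfolding int_mem_R_2_0 int_mem_R_1_0 m_def
    by (simp_all add: inj_image_mem_iff[OF inj_lower_wythoff])
  moreover have "int m \<in> R 1 1"
    unfolding int_mem_R_1_1 m_def using assms by simp
  ultimately have "tau m = nat \<lfloor>(phi - 1) * real m + 1\<rfloor>"
    by (simp add: tau_def)
  also have "\<dots> = lower_wythoff m + 1 - m"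
    using floor_phi_minus_1_mult_add[of m 1] le_lower_wythoff[of m] by simp
  also have "\<dots> = lower_wythoff n"
    using lower_wythoff_lower_wythoff[OF lower_wythoff_pos[OF assms]]
    by (simp add: m_def upper_wythoff_def)
  finally show ?thesis unfolding m_def .
qed

lemma fmap_involution: "0 < n \<Longrightarrow> fmap (fmap n) = n"
  by (cases n rule: wythoff_cases) (simp_all add: fmap_lower_wythoff fmap_upper_wythoff)

lemma fmap_pos: "0 < n \<Longrightarrow> 0 < fmap n"
  by (cases n rule: wythoff_cases)
    (simp_all add: fmap_lower_wythoff fmap_upper_wythoff lower_wythoff_pos upper_wythoff_pos)

lemma tau_pos: "0 < n \<Longrightarrow> 0 < tau n"
  by (cases n rule: wythoff_refined_cases)
    (simp_all add: tau_lower_lower_wythoff tau_lower_upper_wythoff tau_upper_wythoff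
      lower_wythoff_pos upper_wythoff_pos)

lemma tau_fmap_tau: "0 < n \<Longrightarrow> tau (fmap (tau n)) = fmap n"
  by (cases n rule: wythoff_refined_cases)
    (simp_all add: tau_lower_lower_wythoff tau_lower_upper_wythoff tau_upper_wythoff
      fmap_lower_wythoff fmap_upper_wythoff lower_wythoff_pos upper_wythoff_pos)

theorem theorem4p8:
  shows "bij_betw fmap {1..} {1..} \<and> bij_betw tau {1..} {1..} \<and>
         (\<forall>n\<ge>1. fmap (tau n) = inv_into {1..} tau (fmap n))"
proof -
  have fmap_maps: "fmap ` {1..} \<subseteq> {1..}"
    using fmap_pos by (auto simp: Suc_le_eq)
  have tau_maps: "tau ` {1..} \<subseteq> {1..}"
    using tau_pos by (auto simp: Suc_le_eq)
  have fmap_fmap: "\<forall>n\<in>{1..}. fmap (fmap n) = n"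
    and tau_fmap_tau_on: "\<forall>n\<in>{1..}. tau (fmap (tau n)) = fmap n"
    by (simp_all add: fmap_involution tau_fmap_tau)
  have "bij_betw fmap {1..} {1..}"
    using fmap_maps fmap_fmap by (intro bij_betw_byWitness[where f' = fmap]) auto
  with bij_betw_conjugating_involution[OF fmap_maps tau_maps fmap_fmap tau_fmap_tau_on]
  show ?thesis by simp
qed

end
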